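(* Consider an instance of the periodic lock scheduling problem with exactly two streams, one downstream with offset $\mu_D$ and periodicity $\lambda_D\ge2$, and one upstream with offset $\mu_U$ and periodicity $\lambda_U\ge2$. Let $\Lambda=\operatorname{lcm}(\lambda_D,\lambda_U)$. Then for any optimal schedule $\sigma$, $$C_{\mathrm{avg},\sigma}\ge\begin{cases}\frac1\Lambda & \text{if } \mu_U-\mu_D\equiv0\pmod{\gcd(\lambda_D,\lambda_U)},\\ 0&\text{otherwise.}\end{cases}$$
   Context: Periodic lock scheduling problem. Time is discrete, periods $t=1,2,\dots$. Each stream $i$ has a direction $\delta_i\in\{D,U\}$, an integer periodicity $\lambda_i\ge1$ and an integer offset $1\le\mu_i\le\lambda_i$; $a_i(t)=1$ if $t\equiv\mu_i\pmod{\lambda_i}$ and $0$ otherwise, $a_\delta(t)=\sum_{i:\delta_i=\delta}a_i(t)$. A schedule is a sequence $\sigma=(\sigma(t))_{t\ge1}$ with $\sigma(t)\in\{D,U,W\}$ ($D$: process downstream waiting vessels and switch alignment from downstream to upstream; $U$ symmetrically; $W$: wait); the initial orientation is arbitrary; it is feasible if the non-$W$ actions alternate between $D$ and $U$. Queue lengths: $n_D(0)=n_U(0)=0$ and for $t\ge1$, $n_\delta(t)=0$ if $\sigma(t)=\delta$ and $n_\delta(t)=n_\delta(t-1)+a_\delta(t)$ otherwise. $C_\sigma(t)=n_D(t)+n_U(t)$ and $C_{\mathrm{avg},\sigma}=\lim_{T\to\infty}\frac1T\sum_{t=1}^TC_\sigma(t)$. A schedule is optimal if it is feasible and minimizes $C_{\mathrm{avg},\sigma}$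 over all feasible schedules. *)

theory Defs
  imports Complex_Main
begin

datatype action = D | U | W

definition arr2 :: "nat \<Rightarrow> nat \<Rightarrow> nat \<Rightarrow> nat \<Rightarrow> action \<Rightarrow> nat \<Rightarrow> nat" where
  "arr2 lD mD lU mU \<delta> t =
     (case \<delta> of
        D \<Rightarrow> (if t mod lD = mD mod lD then 1 else 0)
      | U \<Rightarrow> (if t mod lU = mU mod lU then 1 else 0)
      | W \<Rightarrow> 0)"

text \<open>Queue lengths n_delta(t); sigma(0) is irrelevant (time starts at 1).\<close>
primrec queue :: "(action \<Rightarrow> nat \<Rightarrow> nat) \<Rightarrow> (nat \<Rightarrow> action) \<Rightarrow> action \<Rightarrow> nat \<Rightarrow> nat" where
  "queue a \<sigma> \<delta> 0 = 0"
| "queue a \<sigma> \<delta> (Suc t) = (if \<sigma> (Suc t) = \<delta> then 0 else queue a \<sigma> \<delta> t + a \<delta> (Suc t))"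

definition cost :: "(action \<Rightarrow> nat \<Rightarrow> nat) \<Rightarrow> (nat \<Rightarrow> action) \<Rightarrow> nat \<Rightarrow> nat" where
  "cost a \<sigma> t = queue a \<sigma> D t + queue a \<sigma> U t"

definition avg_seq :: "(action \<Rightarrow> nat \<Rightarrow> nat) \<Rightarrow> (nat \<Rightarrow> action) \<Rightarrow> nat \<Rightarrow> real" where
  "avg_seq a \<sigma> T = (\<Sum>t=1..T. real (cost a \<sigma> t)) / real T"

definition Cavg :: "(action \<Rightarrow> nat \<Rightarrow> nat) \<Rightarrow> (nat \<Rightarrow> action) \<Rightarrow> real" where
  "Cavg a \<sigma> = lim (avg_seq a \<sigma>)"

definition feasible :: "(nat \<Rightarrow> action) \<Rightarrow> bool" where
  "feasible \<sigma> \<longleftrightarrow> (\<forall>s t. 1 \<le> s \<and> s < t \<and> \<sigma> s \<noteq> W \<and> \<sigma> t \<noteq> W \<and> (\<forall>r. s < r \<and> r < t \<longrightarrow> \<sigma> r = W)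
                      \<longrightarrow> \<sigma> s \<noteq> \<sigma> t)"

definition optimal :: "(action \<Rightarrow> nat \<Rightarrow> nat) \<Rightarrow> (nat \<Rightarrow> action) \<Rightarrow> bool" where
  "optimal a \<sigma> \<longleftrightarrow> feasible \<sigma> \<and> convergent (avg_seq a \<sigma>) \<and>
     (\<forall>\<sigma>'. feasible \<sigma>' \<and> convergent (avg_seq a \<sigma>') \<longrightarrow> Cavg a \<sigma> \<le> Cavg a \<sigma>')"

end

theory Submission
  imports Defs "HOL-Number_Theory.Cong"
begin

text \<open>At a time when a vessel arrives in both directions, a single action can empty at most one
  of the two queues, so the total cost is positive. If the offsets are compatible modulo
  \<open>gcd \<lambda>\<^sub>D \<lambda>\<^sub>U\<close>, the Chinese remainder theorem yields such a simultaneous arrival in every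
  block of \<open>\<Lambda> = lcm \<lambda>\<^sub>D \<lambda>\<^sub>U\<close> consecutive periods; hence the cost averaged over the first
  \<open>n\<Lambda>\<close> periods is at least \<open>1/\<Lambda>\<close>, and so is its limit. Optimality enters only
  through the existence of that limit.\<close>

lemma cost_pos_if_both_arrive:
  assumes "a D t > 0" and "a U t > 0" and "t > 0"
  shows "cost a \<sigma> t > 0"
proof -
  obtain s where "t = Suc s" using \<open>t > 0\<close> gr0_implies_Suc by blast
  then show ?thesis using assms unfolding cost_def by (cases "\<sigma> t") auto
qed

lemma cong_solvable_if_gcd_dvd_int:
  fixes m n a b :: int
  assumes "gcd m n dvd b - a"
  shows "\<exists>x. [x = a] (mod m) \<and> [x = b] (mod n)"
proof -
  obtain c where c: "b - a = gcd m n * c" using assms by (rule dvdE)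
  obtain u v where uv: "u * m + v * n = gcd m n" using bezout_int by blast
  define x where "x = a + c * u * m"
  have "x - b = - (c * v) * n" unfolding x_def using c uv by algebra
  then have "[x = b] (mod n)" by (simp add: cong_iff_dvd_diff)
  moreover have "[x = a] (mod m)" unfolding x_def by (simp add: cong_iff_dvd_diff)
  ultimately show ?thesis by blast
qed

lemma common_arrival_time_exists:
  fixes lD lU mD mU :: nat
  assumes "lD > 0" and "lU > 0" and "(int mU - int mD) mod int (gcd lD lU) = 0"
  shows "\<exists>x\<in>{1..lcm lD lU}. [x = mD] (mod lD) \<and> [x = mU] (mod lU)"
proof -
  define L where "L = lcm lD lU"
  have "L > 0" using assms unfolding L_def by (simp add: lcm_pos_nat)
  obtain y :: int where y: "[y = int mD] (mod int lD)" "[y = int mU] (mod int lU)"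
    using cong_solvable_if_gcd_dvd_int[of "int lD" "int lU" "int mU" "int mD"] assms(3)
    by (auto simp: dvd_eq_mod_eq_0)
  txt \<open>Time starts at 1, so take the representative of \<open>y\<close> in \<open>{1..L}\<close>, not \<open>{0..<L}\<close>.\<close>
  define x where "x = nat ((y - 1) mod int L) + 1"
  have x_range: "x \<in> {1..L}" unfolding x_def using \<open>L > 0\<close> by (simp add: nat_less_iff Suc_le_eq)
  have "int x = (y - 1) mod int L + 1" unfolding x_def using \<open>L > 0\<close> by simp
  then have "[int x = y] (mod int L)"
    by (metis cong_add_rcancel cong_mod_left cong_refl diff_add_cancel)
  then have "[int x = y] (mod int lD)" "[int x = y] (mod int lU)"
    unfolding L_def by (auto elim: cong_dvd_modulus intro: int_dvd_int_iff[THEN iffD2])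
  then have "[x = mD] (mod lD)" "[x = mU] (mod lU)"
    using y by (auto simp flip: cong_int_iff intro: cong_trans)
  then show ?thesis using x_range unfolding L_def by blast
qed

lemma sum_ge_count_of_periodic_ones:
  fixes f :: "nat \<Rightarrow> real"
  assumes nonneg: "\<And>t. f t \<ge> 0" and x: "x \<in> {1..L}" and ones: "\<And>j. f (x + L * j) \<ge> 1"
  shows "real n \<le> (\<Sum>t=1..L * n. f t)"
proof (induction n)
  case 0
  show ?case by simp
next
  case (Suc n)
  have "1 \<le> f (x + L * n)" by (rule ones)
  also have "\<dots> \<le> (\<Sum>t=L * n + 1..L * n + L. f t)"
    using x by (intro member_le_sum nonneg) auto
  finally have block: "1 \<le> (\<Sum>t=L * n + 1..L * n + L. f t)" .
  have "(\<Sum>t=1..L * Suc n. f t) = (\<Sum>t=1..L * n. f t) + (\<Sum>t=L * n + 1..L * n + L. f t)"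
    unfolding mult_Suc_right add.commute[of L] by (rule sum.ub_add_nat) simp
  then show ?case using Suc.IH block by simp
qed

lemma avg_seq_LIMSEQ_Cavg:
  "convergent (avg_seq a \<sigma>) \<Longrightarrow> avg_seq a \<sigma> \<longlonglongrightarrow> Cavg a \<sigma>"
  unfolding Cavg_def by (simp add: convergent_LIMSEQ_iff)

lemma Cavg_nonneg:
  assumes "convergent (avg_seq a \<sigma>)"
  shows "0 \<le> Cavg a \<sigma>"
  using avg_seq_LIMSEQ_Cavg[OF assms]
  by (rule LIMSEQ_le_const) (auto simp: avg_seq_def sum_nonneg)

lemma Cavg_ge_inverse_period:
  assumes "convergent (avg_seq a \<sigma>)" and x: "x \<in> {1..L}"
    and pos: "\<And>j. cost a \<sigma> (x + L * j) > 0"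
  shows "1 / real L \<le> Cavg a \<sigma>"
proof -
  have "L > 0" using x by simp
  note avg_seq_LIMSEQ_Cavg[OF assms(1)]
  moreover have "strict_mono (\<lambda>n. L * Suc n)" using \<open>L > 0\<close> by (auto simp: strict_mono_def)
  ultimately have lim: "(\<lambda>n. avg_seq a \<sigma> (L * Suc n)) \<longlonglongrightarrow> Cavg a \<sigma>"
    using LIMSEQ_subseq_LIMSEQ by (auto simp: o_def)
  have bound: "1 / real L \<le> avg_seq a \<sigma> (L * m)" if "m > 0" for m
  proof -
    have "real m \<le> (\<Sum>t=1..L * m. real (cost a \<sigma> t))"
      using x pos by (intro sum_ge_count_of_periodic_ones) (auto simp: Suc_le_eq)
    then have "real m / real (L * m) \<le> avg_seq a \<sigma> (L * m)"
      unfolding avg_seq_def by (intro divide_right_mono) auto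
    then show ?thesis using \<open>m > 0\<close> by simp
  qed
  show ?thesis by (rule LIMSEQ_le_const[OF lim]) (use bound in blast)
qed

theorem lemma8:
  fixes lD mD lU mU :: nat and \<sigma> :: "nat \<Rightarrow> action"
  assumes "lD \<ge> 2" and "lU \<ge> 2"
    and "1 \<le> mD" and "mD \<le> lD" and "1 \<le> mU" and "mU \<le> lU"
    and "optimal (arr2 lD mD lU mU) \<sigma>"
  shows "Cavg (arr2 lD mD lU mU) \<sigma> \<ge>
           (if (int mU - int mD) mod int (gcd lD lU) = 0 then 1 / real (lcm lD lU) else 0)"
proof -
  let ?a = "arr2 lD mD lU mU" and ?L = "lcm lD lU"
  have conv: "convergent (avg_seq ?a \<sigma>)" using assms(7) unfolding optimal_def by blast
  show ?thesis
  proof (cases "(int mU - int mD) mod int (gcd lD lU) = 0")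
    case False
    then show ?thesis using Cavg_nonneg[OF conv] by simp
  next
    case True
    have "lD > 0" "lU > 0" using assms(1,2) by simp_all
    then obtain x where x: "x \<in> {1..?L}" "[x = mD] (mod lD)" "[x = mU] (mod lU)"
      using common_arrival_time_exists[OF _ _ True] by blast
    have "cost ?a \<sigma> (x + ?L * j) > 0" for j
    proof (rule cost_pos_if_both_arrive)
      have "[x + ?L * j = x] (mod lD)" "[x + ?L * j = x] (mod lU)"
        by (simp_all add: cong_add_lcancel_0_nat cong_0_iff)
      then show "?a D (x + ?L * j) > 0" "?a U (x + ?L * j) > 0"
        using x by (auto simp: arr2_def cong_def)
    qed (use x in auto)
    then show ?thesis using Cavg_ge_inverse_period[OF conv x(1)] True by simp
  qed
qed

end
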